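(* Let $\eta>0$, $F(p)=-\eta\sum_{i=1}^N\log p_i$, and $\tilde\Phi(L)=\min_{p\in\Delta_N}\langle L,p\rangle+F(p)$. Then $\tilde\Phi$ is $(2,1/\eta)$-differentially consistent.
   Context: $\Delta_N$ is the probability simplex in $\mathbb{R}^N$. A function $f:\mathbb{R}^N\to\mathbb{R}$ is $(\gamma,\epsilon)$-differentially consistent if it is twice differentiable and $-\nabla^2_{ii}f\le\epsilon(\nabla_if)^\gamma$ for all $i\in[N]$. *)

theory Defs
  imports "HOL-Analysis.Analysis"
begin

text \<open>Vectors in R^N are modelled as real^'n with a finite index type 'n (N = CARD('n)).\<close>

definition prob_simplex :: "(real ^ 'n::finite) set" where
  "prob_simplex = {p. (\<forall>i. 0 \<le> p $ i) \<and> (\<Sum>i\<in>UNIV. p $ i) = 1}"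

definition logbarrier :: "real \<Rightarrow> real ^ 'n::finite \<Rightarrow> real" where
  "logbarrier \<eta> p = - \<eta> * (\<Sum>i\<in>UNIV. ln (p $ i))"

text \<open>Phi~(L) = min over the prob_simplex of <L,p> + F(p). Since F = +infinity whenever some
  p_i = 0, this is the infimum over prob_simplex points with all coordinates positive.\<close>
definition Phi_tilde :: "real \<Rightarrow> real ^ 'n::finite \<Rightarrow> real" where
  "Phi_tilde \<eta> L = (INF p \<in> {p \<in> prob_simplex. \<forall>i. 0 < p $ i}. L \<bullet> p + logbarrier \<eta> p)"

definition partial :: "(real ^ 'n::finite \<Rightarrow> real) \<Rightarrow> 'n \<Rightarrow> real ^ 'n \<Rightarrow> real" where
  "partial f i x = deriv (\<lambda>t. f (x + t *\<^sub>R axis i 1)) 0"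

definition grad :: "(real ^ 'n::finite \<Rightarrow> real) \<Rightarrow> real ^ 'n \<Rightarrow> real ^ 'n" where
  "grad f x = (\<chi> i. partial f i x)"

definition twice_differentiable :: "(real ^ 'n::finite \<Rightarrow> real) \<Rightarrow> bool" where
  "twice_differentiable f \<longleftrightarrow>
     (\<forall>x. f differentiable (at x)) \<and> (\<forall>x. grad f differentiable (at x))"

definition diff_consistent :: "real \<Rightarrow> real \<Rightarrow> (real ^ 'n::finite \<Rightarrow> real) \<Rightarrow> bool" where
  "diff_consistent \<gamma> \<epsilon> f \<longleftrightarrow> twice_differentiable f \<and>
     (\<forall>x i. - partial (partial f i) i x \<le> \<epsilon> * (partial f i x) powr \<gamma>)"

end

theory Submission
  imports Defs
begin

(* On the open simplex the minimiser of <L,p> - eta sum_i log p_i is p_i = eta / (L_i + lambda(L)),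
   where the shift lambda(L) is the unique solution of sum_i eta / (L_i + lambda) = 1.  By the
   envelope theorem the gradient of Phi~ is this minimiser p(L), and by the implicit function theorem
   lambda is differentiable with d lambda = - sum_j p_j^2 dL_j / sum_j p_j^2.  Hence
   d p_i / d L_i = - (p_i^2 / eta) (1 - p_i^2 / sum_j p_j^2) >= - p_i^2 / eta, which is the claim
   with gamma = 2 and epsilon = 1 / eta. *)

lemma has_derivative_vec_nth [derivative_intros]:
  "(f has_derivative f') F \<Longrightarrow> ((\<lambda>x. f x $ i) has_derivative (\<lambda>h. f' h $ i)) F"
  by (rule bounded_linear.has_derivative[OF bounded_linear_vec_nth])

lemma partial_eq_derivative_axis:
  assumes "(f has_derivative f') (at x)"
  shows "partial f i x = f' (axis i 1)"
proof -
  interpret bounded_linear f' using assms by (rule has_derivative_bounded_linear)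
  have "((\<lambda>t::real. x + t *\<^sub>R axis i 1) has_derivative (\<lambda>t. t *\<^sub>R axis i 1)) (at 0)"
    by (auto intro!: derivative_eq_intros)
  from has_derivative_compose[OF this] assms
  have "((\<lambda>t. f (x + t *\<^sub>R axis i 1)) has_derivative (\<lambda>t. f' (t *\<^sub>R axis i 1))) (at 0)"
    by simp
  then have "((\<lambda>t. f (x + t *\<^sub>R axis i 1)) has_field_derivative f' (axis i 1)) (at 0)"
    by (simp add: has_field_derivative_def scaleR mult_commute_abs)
  then show ?thesis unfolding partial_def by (rule DERIV_imp_deriv)
qed

lemma envelope_has_derivative:
  fixes \<Phi> :: "'a::real_inner \<Rightarrow> real"
  assumes le: "\<And>y x. \<Phi> y \<le> y \<bullet> p x + c x"
    and eq: "\<And>y. \<Phi> y = y \<bullet> p y + c y"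
    and cont: "isCont p L"
  shows "(\<Phi> has_derivative (\<lambda>h. h \<bullet> p L)) (at L)"
  unfolding has_derivative_at_alt
proof (intro conjI allI impI)
  show "bounded_linear (\<lambda>h. h \<bullet> p L)" by (rule bounded_linear_inner_left)
  fix e :: real assume "0 < e"
  then obtain d where "d > 0" and d: "\<And>y. dist y L < d \<Longrightarrow> dist (p y) (p L) < e"
    using cont unfolding continuous_at_eps_delta by blast
  show "\<exists>d>0. \<forall>y. norm (y - L) < d \<longrightarrow>
      norm (\<Phi> y - \<Phi> L - (y - L) \<bullet> p L) \<le> e * norm (y - L)"
  proof (intro exI[of _ d] conjI allI impI)
    fix y assume y: "norm (y - L) < d"
    have "\<Phi> y - \<Phi> L - (y - L) \<bullet> p L \<le> 0"
      using le[of y L] eq[of L] by (simp add: inner_diff_left)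
    moreover have "(y - L) \<bullet> (p y - p L) \<le> \<Phi> y - \<Phi> L - (y - L) \<bullet> p L"
      using le[of L y] eq[of y] by (simp add: inner_diff_left inner_diff_right)
    ultimately have "\<bar>\<Phi> y - \<Phi> L - (y - L) \<bullet> p L\<bar> \<le> \<bar>(y - L) \<bullet> (p y - p L)\<bar>"
      by linarith
    also have "\<dots> \<le> norm (y - L) * norm (p y - p L)" by (rule Cauchy_Schwarz_ineq2)
    also have "\<dots> \<le> norm (y - L) * e"
      using d[of y] y by (intro mult_left_mono) (auto simp: dist_norm)
    finally show "norm (\<Phi> y - \<Phi> L - (y - L) \<bullet> p L) \<le> e * norm (y - L)"
      by (simp add: mult.commute)
  qed (rule \<open>d > 0\<close>)
qed

lemma implicit_function_has_derivative:
  fixes G :: "'a::euclidean_space \<times> real \<Rightarrow> real"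
  assumes "open S"
    and inj: "\<And>x t u. (x, t) \<in> S \<Longrightarrow> (x, u) \<in> S \<Longrightarrow> G (x, t) = G (x, u) \<Longrightarrow> t = u"
    and deriv: "\<And>z. z \<in> S \<Longrightarrow> (G has_derivative G' z) (at z)"
    and xt: "(x, t) \<in> S" "G (x, t) = c"
    and nz: "G' (x, t) (0, 1) \<noteq> 0"
  shows "((\<lambda>y. THE s. (y, s) \<in> S \<and> G (y, s) = c) has_derivative
           (\<lambda>h. - G' (x, t) (h, 0) / G' (x, t) (0, 1))) (at x)"
proof -
  \<comment> \<open>On \<open>S\<close>, \<open>g\<close> inverts \<open>f\<close>; the implicit function is the second component of \<open>g (y, c)\<close>.\<close>
  define D where "D = G' (x, t)"
  define f where "f z = (fst z, G z)" for z
  define g where "g w = (fst w, THE t. (fst w, t) \<in> S \<and> G (fst w, t) = snd w)" for w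
  have "linear D" using deriv[OF xt(1)] unfolding D_def has_derivative_def bounded_linear_def by blast
  then have D_split: "D (a, b) = D (a, 0) + b * D (0, 1)" for a b
    using linear_add[of D "(a, 0)" "(0, b)"] linear_scale[of D b "(0, 1)"] by simp
  have gf: "g (f z) = z" if "z \<in> S" for z
    using that inj unfolding f_def g_def by (cases z) (auto intro!: the_equality)
  have "continuous_on S f"
    unfolding f_def using deriv
    by (intro continuous_on_Pair continuous_on_fst continuous_on_id continuous_at_imp_continuous_on)
       (auto dest: has_derivative_continuous)
  moreover have "(f has_derivative (\<lambda>h. (fst h, D h))) (at (x, t))"
    unfolding f_def D_def using deriv[OF xt(1)] by (auto intro!: derivative_eq_intros)
  moreover have "(\<lambda>h. (fst h, D h)) \<circ> (\<lambda>k. (fst k, (snd k - D (fst k, 0)) / D (0, 1))) = id"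
  proof
    fix k :: "'a \<times> real"
    show "((\<lambda>h. (fst h, D h)) \<circ> (\<lambda>k. (fst k, (snd k - D (fst k, 0)) / D (0, 1)))) k = id k"
      using D_split[of "fst k" "(snd k - D (fst k, 0)) / D (0, 1)"] nz
      unfolding D_def[symmetric] by (simp add: prod_eq_iff)
  qed
  ultimately have "(g has_derivative (\<lambda>k. (fst k, (snd k - D (fst k, 0)) / D (0, 1)))) (at (x, c))"
    using has_derivative_inverse_strong[OF \<open>open S\<close> xt(1), of f g] gf xt(2) unfolding f_def by auto
  moreover have "((\<lambda>y. (y, c)) has_derivative (\<lambda>h. (h, 0))) (at x)"
    by (auto intro!: derivative_eq_intros)
  ultimately have "((\<lambda>y. g (y, c)) has_derivative
      (\<lambda>h. (h, (0 - D (h, 0)) / D (0, 1)))) (at x)"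
    using has_derivative_compose[of "\<lambda>y. (y, c)"] by fastforce
  then have "((\<lambda>y. snd (g (y, c))) has_derivative (\<lambda>h. (0 - D (h, 0)) / D (0, 1))) (at x)"
    using has_derivative_snd by fastforce
  then show ?thesis unfolding g_def D_def by simp
qed

definition shifted_inverse_sum :: "real \<Rightarrow> real^'n::finite \<Rightarrow> real \<Rightarrow> real" where
  "shifted_inverse_sum \<eta> L \<mu> = (\<Sum>i\<in>UNIV. \<eta> / (L $ i + \<mu>))"

definition shift_domain :: "((real^'n::finite) \<times> real) set" where
  "shift_domain = {(L, \<mu>). \<forall>i. 0 < L $ i + \<mu>}"

definition barrier_shift :: "real \<Rightarrow> real^'n::finite \<Rightarrow> real" where
  "barrier_shift \<eta> L = (THE \<mu>. (L, \<mu>) \<in> shift_domain \<and> shifted_inverse_sum \<eta> L \<mu> = 1)"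

text \<open>Stationarity of \<open>\<langle>L, p\<rangle> - \<eta> \<Sum>\<^sub>i ln p\<^sub>i\<close> on the simplex with multiplier \<open>\<lambda>\<close> gives
  \<open>p\<^sub>i = \<eta> / (L\<^sub>i + \<lambda>)\<close>; \<open>barrier_shift\<close> is the \<open>\<lambda>\<close> that makes these weights sum to 1.\<close>

definition barrier_argmin :: "real \<Rightarrow> real^'n::finite \<Rightarrow> real^'n" where
  "barrier_argmin \<eta> L = (\<chi> i. \<eta> / (L $ i + barrier_shift \<eta> L))"

lemma shifted_inverse_sum_strict_antimono:
  assumes "\<eta> > 0" "(L, a) \<in> shift_domain" "a < b"
  shows "shifted_inverse_sum \<eta> L b < shifted_inverse_sum \<eta> L a"
  unfolding shifted_inverse_sum_def
proof (rule sum_strict_mono)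
  fix i
  have "0 < L $ i + a" using assms(2) by (simp add: shift_domain_def)
  then show "\<eta> / (L $ i + b) < \<eta> / (L $ i + a)"
    using assms by (intro divide_strict_left_mono) auto
qed auto

lemma shifted_inverse_sum_inj:
  assumes "\<eta> > 0" "(L, a) \<in> shift_domain" "(L, b) \<in> shift_domain"
    "shifted_inverse_sum \<eta> L a = shifted_inverse_sum \<eta> L b"
  shows "a = b"
  using shifted_inverse_sum_strict_antimono[OF assms(1,2), of b]
    shifted_inverse_sum_strict_antimono[OF assms(1,3), of a] assms(4)
  by (cases a b rule: linorder_cases) auto

lemma shifted_inverse_sum_eq_one_exists:
  fixes L :: "real^'n::finite"
  assumes "\<eta> > 0"
  shows "\<exists>\<mu>. (L, \<mu>) \<in> shift_domain \<and> shifted_inverse_sum \<eta> L \<mu> = 1"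
proof -
  define m where "m = Min (range (\<lambda>i. L $ i))"
  have m_le: "m \<le> L $ i" for i unfolding m_def by (rule Min_le) auto
  have "m \<in> range (\<lambda>i. L $ i)" unfolding m_def by (rule Min_in) auto
  then obtain k where k: "L $ k = m" by auto
  define N where "N = real CARD('n)"
  have "N \<ge> 1" unfolding N_def by (simp add: Suc_leI)
  define a where "a = \<eta> - m"
  define b where "b = \<eta> * N - m"
  have "a \<le> b" unfolding a_def b_def using \<open>N \<ge> 1\<close> assms by simp
  have pos: "0 < L $ i + x" if "a \<le> x" for i x
    using m_le[of i] that assms unfolding a_def by linarith
  have "continuous_on {a..b} (shifted_inverse_sum \<eta> L)"
    unfolding shifted_inverse_sum_def
    by (intro continuous_intros) (metis atLeastAtMost_iff pos less_irrefl)
  moreover have "1 \<le> shifted_inverse_sum \<eta> L a"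
  proof -
    have "1 = \<eta> / (L $ k + a)" using k assms unfolding a_def by simp
    also have "\<dots> \<le> shifted_inverse_sum \<eta> L a" unfolding shifted_inverse_sum_def
      by (rule member_le_sum) (use pos assms in \<open>auto intro!: divide_nonneg_pos less_imp_le\<close>)
    finally show ?thesis .
  qed
  moreover have "shifted_inverse_sum \<eta> L b \<le> 1"
  proof -
    have "shifted_inverse_sum \<eta> L b \<le> (\<Sum>i\<in>(UNIV::'n set). 1 / N)"
      unfolding shifted_inverse_sum_def
    proof (rule sum_mono)
      fix i :: 'n
      have "0 < \<eta> * N" using assms \<open>N \<ge> 1\<close> by simp
      then have "\<eta> / (L $ i + b) \<le> \<eta> / (\<eta> * N)"
        using m_le[of i] assms unfolding b_def by (intro divide_left_mono) auto
      then show "\<eta> / (L $ i + b) \<le> 1 / N" using assms by simp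
    qed
    also have "\<dots> = 1" using \<open>N \<ge> 1\<close> unfolding N_def by simp
    finally show ?thesis .
  qed
  ultimately obtain x where "a \<le> x" "shifted_inverse_sum \<eta> L x = 1"
    using IVT2'[of "shifted_inverse_sum \<eta> L" b 1 a] \<open>a \<le> b\<close> by auto
  then show ?thesis using pos unfolding shift_domain_def by auto
qed

lemma barrier_shift:
  assumes "\<eta> > 0"
  shows "(L, barrier_shift \<eta> L) \<in> shift_domain" "shifted_inverse_sum \<eta> L (barrier_shift \<eta> L) = 1"
proof -
  obtain \<mu> where \<mu>: "(L, \<mu>) \<in> shift_domain" "shifted_inverse_sum \<eta> L \<mu> = 1"
    using shifted_inverse_sum_eq_one_exists[OF assms] by blast
  have "barrier_shift \<eta> L = \<mu>"
    unfolding barrier_shift_def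
  proof (rule the_equality)
    show "(L, \<mu>) \<in> shift_domain \<and> shifted_inverse_sum \<eta> L \<mu> = 1" using \<mu> by blast
  qed (use \<mu> shifted_inverse_sum_inj[OF assms] in metis)
  with \<mu> show "(L, barrier_shift \<eta> L) \<in> shift_domain"
    "shifted_inverse_sum \<eta> L (barrier_shift \<eta> L) = 1" by simp_all
qed

lemma barrier_shift_pos: "\<eta> > 0 \<Longrightarrow> 0 < L $ i + barrier_shift \<eta> L"
  using barrier_shift(1)[of \<eta> L] unfolding shift_domain_def by simp

lemma barrier_argmin_pos: "\<eta> > 0 \<Longrightarrow> 0 < barrier_argmin \<eta> L $ i"
  using barrier_shift_pos[of \<eta> L i] unfolding barrier_argmin_def by simp

lemma barrier_argmin_mult_shift:
  "\<eta> > 0 \<Longrightarrow> barrier_argmin \<eta> L $ i * (L $ i + barrier_shift \<eta> L) = \<eta>"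
  using barrier_shift_pos[of \<eta> L i] unfolding barrier_argmin_def by simp

lemma barrier_argmin_in_simplex: "\<eta> > 0 \<Longrightarrow> barrier_argmin \<eta> L \<in> prob_simplex"
  using barrier_argmin_pos[of \<eta> L] barrier_shift(2)[of \<eta> L]
  unfolding prob_simplex_def by (auto intro: less_imp_le simp: barrier_argmin_def shifted_inverse_sum_def)

lemma inner_add_logbarrier_eq_sum:
  "L \<bullet> p + logbarrier \<eta> p = (\<Sum>i\<in>UNIV. L $ i * p $ i - \<eta> * ln (p $ i))"
  by (simp add: logbarrier_def inner_vec_def sum_subtractf sum_distrib_left sum_negf)

lemma logbarrier_objective_le:
  assumes "0 \<le> \<eta>" "\<forall>i. 0 < q $ i" "\<forall>i. q $ i * (L $ i + c) = \<eta>" "(\<Sum>i\<in>UNIV. q $ i) = 1"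
    and "\<forall>i. 0 < p $ i" "(\<Sum>i\<in>UNIV. p $ i) = 1"
  shows "L \<bullet> q + logbarrier \<eta> q \<le> L \<bullet> p + logbarrier \<eta> p"
proof -
  have "L $ i * q $ i - \<eta> * ln (q $ i) \<le> L $ i * p $ i - \<eta> * ln (p $ i) + c * p $ i - c * q $ i" for i
  proof -
    have qp: "0 < q $ i" "0 < p $ i" using assms by auto
    have "\<eta> * (ln (p $ i) - ln (q $ i)) = \<eta> * ln (p $ i / q $ i)" using qp by (simp add: ln_div)
    also have "\<dots> \<le> \<eta> * (p $ i / q $ i - 1)" using qp assms(1) by (intro mult_left_mono ln_le_minus_one) auto
    also have "\<dots> = q $ i * (L $ i + c) * (p $ i / q $ i - 1)" using assms(3) by simp
    also have "\<dots> = p $ i * (L $ i + c) - q $ i * (L $ i + c)" using qp by (simp add: field_simps)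
    finally show ?thesis by (simp add: algebra_simps)
  qed
  then have "(\<Sum>i\<in>UNIV. L $ i * q $ i - \<eta> * ln (q $ i))
      \<le> (\<Sum>i\<in>UNIV. L $ i * p $ i - \<eta> * ln (p $ i) + c * p $ i - c * q $ i)"
    by (rule sum_mono)
  also have "\<dots> = (\<Sum>i\<in>UNIV. L $ i * p $ i - \<eta> * ln (p $ i))
      + c * (\<Sum>i\<in>UNIV. p $ i) - c * (\<Sum>i\<in>UNIV. q $ i)"
    by (simp add: sum.distrib sum_subtractf sum_distrib_left)
  finally have "(\<Sum>i\<in>UNIV. L $ i * q $ i - \<eta> * ln (q $ i)) \<le> (\<Sum>i\<in>UNIV. L $ i * p $ i - \<eta> * ln (p $ i))"
    using assms(4,6) by simp
  then show ?thesis by (simp only: inner_add_logbarrier_eq_sum)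
qed

lemma barrier_argmin_minimizes:
  assumes "\<eta> > 0" "p \<in> prob_simplex" "\<forall>i. 0 < p $ i"
  shows "L \<bullet> barrier_argmin \<eta> L + logbarrier \<eta> (barrier_argmin \<eta> L) \<le> L \<bullet> p + logbarrier \<eta> p"
proof (rule logbarrier_objective_le)
  show "\<forall>i. barrier_argmin \<eta> L $ i * (L $ i + barrier_shift \<eta> L) = \<eta>"
    using barrier_argmin_mult_shift[OF assms(1)] by blast
qed (use assms barrier_argmin_pos[OF assms(1)] barrier_argmin_in_simplex[OF assms(1)]
      in \<open>auto simp: prob_simplex_def\<close>)

lemma Phi_tilde_eq_argmin:
  assumes "\<eta> > 0"
  shows "Phi_tilde \<eta> L = L \<bullet> barrier_argmin \<eta> L + logbarrier \<eta> (barrier_argmin \<eta> L)"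
  unfolding Phi_tilde_def
  by (rule cInf_eq_minimum)
     (use assms barrier_argmin_in_simplex barrier_argmin_pos barrier_argmin_minimizes in \<open>auto intro!: imageI\<close>)

lemma open_shift_domain: "open (shift_domain :: ((real^'n::finite) \<times> real) set)"
proof -
  have "shift_domain = (\<Inter>i\<in>UNIV. {z :: (real^'n) \<times> real. 0 < fst z $ i + snd z})"
    unfolding shift_domain_def by auto
  also have "open \<dots>"
    by (rule open_INT) (auto intro!: open_Collect_less continuous_intros)
  finally show ?thesis .
qed

lemma shifted_inverse_sum_has_derivative:
  assumes "(L, \<mu>) \<in> shift_domain"
  shows "(case_prod (shifted_inverse_sum \<eta>) has_derivative
           (\<lambda>h. - (\<Sum>i\<in>UNIV. \<eta> / (L $ i + \<mu>)^2 * (fst h $ i + snd h)))) (at (L, \<mu>))"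
proof -
  have "((\<lambda>z. \<eta> / (fst z $ i + snd z)) has_derivative
      (\<lambda>h. - (\<eta> / (L $ i + \<mu>)^2 * (fst h $ i + snd h)))) (at (L, \<mu>))" for i
  proof -
    have "0 < L $ i + \<mu>" using assms by (simp add: shift_domain_def)
    then show ?thesis
      by (auto intro!: derivative_eq_intros simp: power2_eq_square divide_inverse)
  qed
  then show ?thesis
    unfolding shifted_inverse_sum_def case_prod_beta sum_negf[symmetric]
    by (rule has_derivative_sum)
qed

definition barrier_shift_deriv :: "real \<Rightarrow> real^'n::finite \<Rightarrow> real^'n \<Rightarrow> real" where
  "barrier_shift_deriv \<eta> L h =
     - (\<Sum>i\<in>UNIV. (barrier_argmin \<eta> L $ i)^2 * h $ i) / (\<Sum>i\<in>UNIV. (barrier_argmin \<eta> L $ i)^2)"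

lemma barrier_shift_has_derivative:
  fixes L :: "real^'n::finite"
  assumes "\<eta> > 0"
  shows "(barrier_shift \<eta> has_derivative barrier_shift_deriv \<eta> L) (at L)"
proof -
  define G' where "G' z h = - (\<Sum>i\<in>UNIV. \<eta> / (fst z $ i + snd z)^2 * (fst h $ i + snd h))"
    for z h :: "(real^'n) \<times> real"
  define p where "p = barrier_argmin \<eta> L"
  define t where "t = barrier_shift \<eta> L"
  have t: "(L, t) \<in> shift_domain" "case_prod (shifted_inverse_sum \<eta>) (L, t) = 1"
    using barrier_shift[OF assms, of L] unfolding t_def by simp_all
  have deriv: "(case_prod (shifted_inverse_sum \<eta>) has_derivative G' z) (at z)" if "z \<in> shift_domain" for z
    using shifted_inverse_sum_has_derivative[of "fst z" "snd z" \<eta>] that unfolding G'_def by simp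
  have weight: "\<eta> / (L $ i + t)^2 = (p $ i)^2 / \<eta>" for i
    using assms unfolding p_def t_def barrier_argmin_def by (simp add: power2_eq_square)
  have "0 < p $ i" for i using barrier_argmin_pos[OF assms] unfolding p_def .
  then have "0 < (\<Sum>i\<in>UNIV. (p $ i)^2)" by (intro sum_pos zero_less_power) auto
  then have nz: "G' (L, t) (0, 1) \<noteq> 0"
    using assms unfolding G'_def by (simp add: weight flip: sum_divide_distrib)
  have shift_eq: "barrier_shift \<eta> =
      (\<lambda>y. THE s. (y, s) \<in> shift_domain \<and> case_prod (shifted_inverse_sum \<eta>) (y, s) = 1)"
    unfolding barrier_shift_def by simp
  have deriv_eq: "barrier_shift_deriv \<eta> L = (\<lambda>h. - G' (L, t) (h, 0) / G' (L, t) (0, 1))"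
    using assms unfolding G'_def barrier_shift_deriv_def p_def[symmetric]
    by (simp add: weight flip: sum_divide_distrib)
  show ?thesis
    unfolding shift_eq deriv_eq
  proof (rule implicit_function_has_derivative[OF open_shift_domain _ deriv t nz])
    show "u = v" if "(x, u) \<in> shift_domain" "(x, v) \<in> shift_domain"
      "case_prod (shifted_inverse_sum \<eta>) (x, u) = case_prod (shifted_inverse_sum \<eta>) (x, v)"
      for x :: "real^'n" and u v
      using shifted_inverse_sum_inj[OF assms that(1,2)] that(3) by simp
  qed
qed

lemma barrier_argmin_component_has_derivative:
  fixes L :: "real^'n::finite"
  assumes "\<eta> > 0"
  shows "((\<lambda>L. barrier_argmin \<eta> L $ i) has_derivative
           (\<lambda>h. - ((barrier_argmin \<eta> L $ i)^2 / \<eta> * (h $ i + barrier_shift_deriv \<eta> L h)))) (at L)"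
proof -
  have "L $ i + barrier_shift \<eta> L \<noteq> 0" using barrier_shift_pos[OF assms, of L i] by simp
  then show ?thesis
    unfolding barrier_argmin_def vec_lambda_beta
    using barrier_shift_has_derivative[OF assms, of L]
    by (auto intro!: derivative_eq_intros ext simp: power2_eq_square divide_inverse)
qed

lemma barrier_argmin_has_derivative:
  fixes L :: "real^'n::finite"
  assumes "\<eta> > 0"
  shows "(barrier_argmin \<eta> has_derivative
           (\<lambda>h. \<chi> i. - ((barrier_argmin \<eta> L $ i)^2 / \<eta> * (h $ i + barrier_shift_deriv \<eta> L h)))) (at L)"
  using barrier_argmin_component_has_derivative[OF assms]
  by (auto simp: has_derivative_componentwise_within[of "barrier_argmin \<eta>"] Basis_vec_def inner_axis)

lemma Phi_tilde_has_derivative: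
  fixes L :: "real^'n::finite"
  assumes "\<eta> > 0"
  shows "(Phi_tilde \<eta> has_derivative (\<lambda>h. h \<bullet> barrier_argmin \<eta> L)) (at L)"
proof (rule envelope_has_derivative[where c = "\<lambda>x. logbarrier \<eta> (barrier_argmin \<eta> x)"])
  show "Phi_tilde \<eta> y \<le> y \<bullet> barrier_argmin \<eta> x + logbarrier \<eta> (barrier_argmin \<eta> x)"
    for x y :: "real^'n"
    unfolding Phi_tilde_eq_argmin[OF assms]
    by (rule barrier_argmin_minimizes[OF assms barrier_argmin_in_simplex[OF assms]])
       (simp add: barrier_argmin_pos[OF assms])
  show "isCont (barrier_argmin \<eta>) L"
    using barrier_argmin_has_derivative[OF assms] by (rule has_derivative_continuous)
qed (rule Phi_tilde_eq_argmin[OF assms])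

lemma partial_Phi_tilde:
  "\<eta> > 0 \<Longrightarrow> partial (Phi_tilde \<eta>) i = (\<lambda>L::real^'n::finite. barrier_argmin \<eta> L $ i)"
  by (rule ext) (simp add: partial_eq_derivative_axis[OF Phi_tilde_has_derivative] inner_axis')

lemma second_partial_Phi_tilde:
  fixes L :: "real^'n::finite"
  assumes "\<eta> > 0"
  shows "partial (partial (Phi_tilde \<eta>) i) i L
    = - ((barrier_argmin \<eta> L $ i)^2 / \<eta>
         * (1 - (barrier_argmin \<eta> L $ i)^2 / (\<Sum>j\<in>UNIV. (barrier_argmin \<eta> L $ j)^2)))"
proof -
  have "(\<Sum>j\<in>UNIV. (barrier_argmin \<eta> L $ j)^2 * axis i 1 $ j) = (barrier_argmin \<eta> L $ i)^2"
    unfolding axis_def by (simp add: if_distrib cong: if_cong)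
  then show ?thesis
    unfolding partial_Phi_tilde[OF assms]
      partial_eq_derivative_axis[OF barrier_argmin_component_has_derivative[OF assms]]
    by (simp add: barrier_shift_deriv_def)
qed

theorem lemma8:
  fixes \<eta> :: real
  assumes "\<eta> > 0"
  shows "diff_consistent 2 (1 / \<eta>) (Phi_tilde \<eta> :: real ^ 'n::finite \<Rightarrow> real)"
proof -
  have "grad (Phi_tilde \<eta>) = (barrier_argmin \<eta> :: real^'n \<Rightarrow> real^'n)"
    unfolding grad_def partial_Phi_tilde[OF assms] by simp
  then have "twice_differentiable (Phi_tilde \<eta> :: real^'n \<Rightarrow> real)"
    unfolding twice_differentiable_def differentiable_def
    using Phi_tilde_has_derivative[OF assms] barrier_argmin_has_derivative[OF assms] by auto
  moreover have "- partial (partial (Phi_tilde \<eta>) i) i L \<le> 1 / \<eta> * partial (Phi_tilde \<eta>) i L powr 2"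
    for i and L :: "real^'n"
  proof -
    define p where "p = barrier_argmin \<eta> L"
    have "0 < p $ i" unfolding p_def by (rule barrier_argmin_pos[OF assms])
    have "- partial (partial (Phi_tilde \<eta>) i) i L = (p $ i)^2 / \<eta> * (1 - (p $ i)^2 / (\<Sum>j\<in>UNIV. (p $ j)^2))"
      unfolding second_partial_Phi_tilde[OF assms] p_def by simp
    also have "\<dots> \<le> (p $ i)^2 / \<eta>"
      using assms by (intro mult_left_le) (auto intro!: divide_nonneg_nonneg sum_nonneg)
    also have "\<dots> = 1 / \<eta> * partial (Phi_tilde \<eta>) i L powr 2"
      unfolding partial_Phi_tilde[OF assms] p_def[symmetric] using \<open>0 < p $ i\<close> by simp
    finally show ?thesis .
  qed
  ultimately show ?thesis unfolding diff_consistent_def by blast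
qed

end
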